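(* Fix a sign $\varepsilon\in\{+1,-1\}$. There do not exist positive rational numbers $x_1,x_2,x_3,d_1,d_2,d_3$ satisfying $$x_1^2+x_2^2+x_3^2=1,\quad x_2^2+x_3^2=d_1^2,\quad x_3^2+x_1^2=d_2^2,\quad x_1^2+x_2^2=d_3^2$$ together with a rational number $c$ such that $$e_{[1,1]}=c,\qquad e_{[0,1]}=-c,\qquad e_{[1,0]}=\varepsilon c-1.$$ In other words, no rational perfect cuboid with unit space diagonal corresponds to the one-parameter families $E_{11}=c$, $E_{01}=-c$, $E_{10}=\pm c-1$ of rational solutions of the equation $(2E_{11})^2+(E_{01}^2+1-E_{10}^2)^2=8E_{01}^2$.
   Context: A rational perfect cuboid with unit space diagonal is a tuple of positive rationals $x_1,x_2,x_3$ (edges) and $d_1,d_2,d_3$ (face diagonals) satisfying $x_1^2+x_2^2+x_3^2=1$, $x_2^2+x_3^2=d_1^2$, $x_3^2+x_1^2=d_2^2$, $x_1^2+x_2^2=d_3^2$. (Integer perfect cuboids, i.e. cuboids with integer edges, integer face diagonals and integer space diagonal $L$, correspond to these after dividing by $L$.) The elementary multisymmetric polynomials used are $e_{[1,0]}=x_1+x_2+x_3$, $e_{[0,1]}=d_1+d_2+d_3$, and $e_{[1,1]}=x_1d_2+d_1x_2+x_2d_3+d_2x_3+x_3d_1+d_3x_1$. *)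

theory Defs
  imports Complex_Main
begin

definition e10 :: "rat \<Rightarrow> rat \<Rightarrow> rat \<Rightarrow> rat" where
  "e10 x1 x2 x3 = x1 + x2 + x3"

definition e01 :: "rat \<Rightarrow> rat \<Rightarrow> rat \<Rightarrow> rat" where
  "e01 d1 d2 d3 = d1 + d2 + d3"

definition e11 :: "rat \<Rightarrow> rat \<Rightarrow> rat \<Rightarrow> rat \<Rightarrow> rat \<Rightarrow> rat \<Rightarrow> rat" where
  "e11 x1 x2 x3 d1 d2 d3 =
     x1*d2 + d1*x2 + x2*d3 + d2*x3 + x3*d1 + d3*x1"

end

theory Submission
  imports Defs
begin

(* The relations E11 = c and E01 = -c force e11 and e01 to have
   opposite signs (or both vanish).  For a genuine cuboid every edge x_i and
   every face diagonal d_i is positive, so both multisymmetric polynomials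
   e11 and e01 are strictly positive; hence the two relations cannot hold at
   once. *)

lemma e01_pos:
  assumes "d1 > 0" "d2 > 0" "d3 > 0"
  shows "e01 d1 d2 d3 > 0"
  using assms unfolding e01_def by simp

lemma e11_pos:
  assumes "x1 > 0" "x2 > 0" "x3 > 0" "d1 > 0" "d2 > 0" "d3 > 0"
  shows "e11 x1 x2 x3 d1 d2 d3 > 0"
  using assms unfolding e11_def by (simp add: add_pos_pos)

lemma e11_ne_neg_e01:
  assumes "x1 > 0" "x2 > 0" "x3 > 0" "d1 > 0" "d2 > 0" "d3 > 0"
  shows "e01 d1 d2 d3 \<noteq> - e11 x1 x2 x3 d1 d2 d3"
proof -
  have "e11 x1 x2 x3 d1 d2 d3 > 0" using assms by (rule e11_pos)
  moreover have "e01 d1 d2 d3 > 0" using assms(4-6) by (rule e01_pos)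
  ultimately show ?thesis by simp
qed

theorem theorem6p1:
  fixes \<epsilon> :: rat
  assumes "\<epsilon> = 1 \<or> \<epsilon> = -1"
  shows "\<not> (\<exists>x1 x2 x3 d1 d2 d3 c :: rat.
            x1 > 0 \<and> x2 > 0 \<and> x3 > 0 \<and> d1 > 0 \<and> d2 > 0 \<and> d3 > 0 \<and>
            x1^2 + x2^2 + x3^2 = 1 \<and>
            x2^2 + x3^2 = d1^2 \<and> x3^2 + x1^2 = d2^2 \<and> x1^2 + x2^2 = d3^2 \<and>
            e11 x1 x2 x3 d1 d2 d3 = c \<and>
            e01 d1 d2 d3 = - c \<and>
            e10 x1 x2 x3 = \<epsilon> * c - 1)"
proof
  assume "\<exists>x1 x2 x3 d1 d2 d3 c :: rat.
            x1 > 0 \<and> x2 > 0 \<and> x3 > 0 \<and> d1 > 0 \<and> d2 > 0 \<and> d3 > 0 \<and>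
            x1^2 + x2^2 + x3^2 = 1 \<and>
            x2^2 + x3^2 = d1^2 \<and> x3^2 + x1^2 = d2^2 \<and> x1^2 + x2^2 = d3^2 \<and>
            e11 x1 x2 x3 d1 d2 d3 = c \<and>
            e01 d1 d2 d3 = - c \<and>
            e10 x1 x2 x3 = \<epsilon> * c - 1"
  then obtain x1 x2 x3 d1 d2 d3 c :: rat
    where pos: "x1 > 0" "x2 > 0" "x3 > 0" "d1 > 0" "d2 > 0" "d3 > 0"
      and E11: "e11 x1 x2 x3 d1 d2 d3 = c"
      and E01: "e01 d1 d2 d3 = - c"
    by blast
  have "e01 d1 d2 d3 = - e11 x1 x2 x3 d1 d2 d3" using E11 E01 by simp
  with e11_ne_neg_e01[OF pos] show False by contradiction
qed

end
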